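(* Let $V$ be a ground model, $\kappa$ an infinite cardinal, and $\mathbb{A}\in V$ an atomless Boolean algebra. If $\dot{\mathcal{U}}$ and $\dot{\mathcal{V}}$ are $\mathbb{M}_\kappa$-names for ultrafilters on $\mathbb{A}$ such that $\Vdash_{\mathbb{M}_\kappa}\dot{\mathcal{U}}\neq\dot{\mathcal{V}}$, then for every $\varepsilon>0$ there are $p\in\mathbb{M}_\kappa$ and $C\in\mathbb{A}$ such that $\lambda_\kappa(p)>1/4-\varepsilon$ and $p\Vdash C\in\dot{\mathcal{U}}\triangle\dot{\mathcal{V}}$.
   Context: $\mathbb{M}_\kappa=Bor(2^\kappa)/\mathcal{N}_\kappa$ is the measure algebra of the standard product measure $\lambda_\kappa$ on $2^\kappa$ ($\lambda_\kappa$ also denotes the induced strictly positive measure on $\mathbb{M}_\kappa$), used as a forcing notion. An $\mathbb{M}_\kappa$-name for an ultrafilter on $\mathbb{A}$ is a name $\dot{\mathcal{U}}$ with $\Vdash_{\mathbb{M}_\kappa}$ "$\dot{\mathcal{U}}$ is an ultrafilter on $\mathbb{A}$". *)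

theory Defs
  imports "HOL-Probability.Probability"
begin

text \<open>The standard product probability measure on the Cantor cube 2^kappa, where kappa is
  the cardinality of the index type 'k. Its sigma-algebra is the product sigma-algebra;
  the measure algebra M_kappa is sets modulo null sets, represented here by measurable
  sets compared up to null sets.\<close>
definition cantor_measure :: "('k \<Rightarrow> bool) measure" where
  "cantor_measure = PiM UNIV (\<lambda>_. measure_pmf (bernoulli_pmf (1/2)))"

definition symdiff :: "'x set \<Rightarrow> 'x set \<Rightarrow> 'x set" where
  "symdiff A B = (A - B) \<union> (B - A)"

definition null_eq :: "'x measure \<Rightarrow> 'x set \<Rightarrow> 'x set \<Rightarrow> bool" where
  "null_eq M A B \<longleftrightarrow> A \<in> sets M \<and> B \<in> sets M \<and> measure M (symdiff A B) = 0"

definition atomless_ba :: "'a::boolean_algebra itself \<Rightarrow> bool" where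
  "atomless_ba _ \<longleftrightarrow> (\<forall>a::'a. a \<noteq> bot \<longrightarrow> (\<exists>b. bot < b \<and> b < a))"

text \<open>A name for an ultrafilter on the ground-model Boolean algebra 'a, given by its
  Boolean values u a = [[a in U]] in the measure algebra of M: these are exactly the
  Boolean homomorphisms from 'a into the measure algebra.\<close>
definition ultrafilter_name :: "'x measure \<Rightarrow> ('a::boolean_algebra \<Rightarrow> 'x set) \<Rightarrow> bool" where
  "ultrafilter_name M u \<longleftrightarrow>
     (\<forall>a. u a \<in> sets M) \<and>
     null_eq M (u top) (space M) \<and>
     (\<forall>a b. null_eq M (u (inf a b)) (u a \<inter> u b)) \<and>
     (\<forall>a. null_eq M (u (- a)) (space M - u a))"

text \<open>The top element forces U \<noteq> V: the Boolean value
  sup_a ([[a in U]] symdiff [[a in V]]) is 1, i.e. no positive-measure set is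
  disjoint (mod null) from all of them.\<close>
definition forces_neq :: "'x measure \<Rightarrow> ('a \<Rightarrow> 'x set) \<Rightarrow> ('a \<Rightarrow> 'x set) \<Rightarrow> bool" where
  "forces_neq M u v \<longleftrightarrow>
     (\<forall>P \<in> sets M. (\<forall>a. measure M (P \<inter> symdiff (u a) (v a)) = 0) \<longrightarrow> measure M P = 0)"

text \<open>p forces C in U symdiff V: p is below [[C in U]] symdiff [[C in V]] in the measure algebra.\<close>
definition forces_in_symdiff :: "'x measure \<Rightarrow> 'x set \<Rightarrow> 'a \<Rightarrow> ('a \<Rightarrow> 'x set) \<Rightarrow> ('a \<Rightarrow> 'x set) \<Rightarrow> bool" where
  "forces_in_symdiff M p C u v \<longleftrightarrow> measure M (p - symdiff (u C) (v C)) = 0"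

end

theory Submission
  imports Defs
begin

text \<open>Write \<open>D a\<close> for the Boolean value of \<open>a \<in> U \<triangle> V\<close>. Up to null sets, \<open>D\<close> maps the
  symmetric difference of \<open>'a\<close> to the symmetric difference of sets, so for finite \<open>F \<subseteq> 'a\<close>
  each point of \<open>\<Union>a\<in>F. D a\<close> lies in \<open>D (\<Oplus>S)\<close> for exactly half of the subsets \<open>S \<subseteq> F\<close>;
  averaging over \<open>S\<close> gives \<open>C = \<Oplus>S\<close> with \<open>\<lambda>(D C) \<ge> \<lambda>(\<Union>a\<in>F. D a) / 2\<close>. The forced
  inequality \<open>U \<noteq> V\<close> says that the sets \<open>D a\<close> have an essential union of full measure, so
  finite unions of them have measure arbitrarily close to 1.\<close>

definition bxor :: "'a::boolean_algebra \<Rightarrow> 'a \<Rightarrow> 'a" where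
  "bxor x y = sup (inf x (- y)) (inf (- x) y)"

interpretation bxor: abstract_boolean_algebra_sym_diff
  "inf :: 'a::boolean_algebra \<Rightarrow> _" sup uminus bot top bxor
  by unfold_locales (simp add: bxor_def)

interpretation bxor_sum: comm_monoid_set "bxor :: 'a::boolean_algebra \<Rightarrow> _" bot
  by unfold_locales

lemma bxor_sum_symdiff_singleton:
  fixes S :: "'a::boolean_algebra set"
  assumes "finite S"
  shows "bxor_sum.F id (symdiff S {a}) = bxor a (bxor_sum.F id S)"
proof (cases "a \<in> S")
  case True
  then have "symdiff S {a} = S - {a}" by (auto simp: symdiff_def)
  moreover have "bxor_sum.F id S = bxor a (bxor_sum.F id (S - {a}))"
    using bxor_sum.remove[OF assms True] by simp
  ultimately show ?thesis by simp
next
  case False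
  then have "symdiff S {a} = insert a S" by (auto simp: symdiff_def)
  then show ?thesis using bxor_sum.insert[OF assms False] by simp
qed

lemma sum_Pow_eq_half_card_if_flip_complements:
  fixes g :: "'b set \<Rightarrow> real"
  assumes "finite F" "a \<in> F"
    and flip: "\<And>S. S \<subseteq> F \<Longrightarrow> g (symdiff S {a}) = 1 - g S"
  shows "(\<Sum>S\<in>Pow F. g S) = card (Pow F) / 2"
proof -
  have involution: "symdiff (symdiff S {a}) {a} = S" for S by (auto simp: symdiff_def)
  have "(\<Sum>S\<in>Pow F. g S) = (\<Sum>S\<in>Pow F. g (symdiff S {a}))"
    by (rule sum.reindex_bij_witness[of _ "\<lambda>S. symdiff S {a}" "\<lambda>S. symdiff S {a}"])
       (use assms(2) in \<open>auto simp: involution, auto simp: symdiff_def\<close>)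
  also have "\<dots> = (\<Sum>S\<in>Pow F. 1 - g S)" by (intro sum.cong) (auto simp: flip)
  also have "\<dots> = card (Pow F) - (\<Sum>S\<in>Pow F. g S)" by (simp add: sum_subtractf)
  finally show ?thesis by simp
qed

definition disagreement :: "('a \<Rightarrow> 'x set) \<Rightarrow> ('a \<Rightarrow> 'x set) \<Rightarrow> 'a \<Rightarrow> 'x set" where
  "disagreement u v a = symdiff (u a) (v a)"

lemma ultrafilter_name_sets: "ultrafilter_name M u \<Longrightarrow> u a \<in> sets M"
  by (simp add: ultrafilter_name_def)

lemma disagreement_sets:
  "ultrafilter_name M u \<Longrightarrow> ultrafilter_name M v \<Longrightarrow> disagreement u v a \<in> sets M"
  unfolding disagreement_def symdiff_def by (intro sets.Un sets.Diff ultrafilter_name_sets)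

lemma AE_iff_if_null_eq:
  assumes "finite_measure M" "null_eq M A B"
  shows "AE x in M. x \<in> A \<longleftrightarrow> x \<in> B"
proof -
  have "symdiff A B \<in> null_sets M"
    using assms finite_measure.emeasure_eq_measure[OF assms(1)]
    by (auto simp: null_eq_def symdiff_def)
  then show ?thesis by (rule AE_I') (auto simp: symdiff_def)
qed

lemma AE_ultrafilter_name_bxor:
  assumes M: "finite_measure M" and u: "ultrafilter_name M u"
  shows "AE x in M. x \<in> u (bxor a b) \<longleftrightarrow> ((x \<in> u a) \<noteq> (x \<in> u b))"
proof -
  have inf: "AE x in M. x \<in> u (inf c d) \<longleftrightarrow> x \<in> u c \<and> x \<in> u d" for c d
  proof -
    have "null_eq M (u (inf c d)) (u c \<inter> u d)" using u by (simp add: ultrafilter_name_def)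
    from AE_iff_if_null_eq[OF M this] show ?thesis by simp
  qed
  have compl: "AE x in M. x \<in> u (- c) \<longleftrightarrow> x \<in> space M \<and> x \<notin> u c" for c
  proof -
    have "null_eq M (u (- c)) (space M - u c)" using u by (simp add: ultrafilter_name_def)
    from AE_iff_if_null_eq[OF M this] show ?thesis by simp
  qed
  let ?c1 = "inf a (- b)" and ?c2 = "inf (- a) b"
  have de_Morgan: "bxor a b = - (inf (- ?c1) (- ?c2))" by (simp add: bxor_def)
  show ?thesis
    unfolding de_Morgan
    using AE_space compl[of a] compl[of b] inf[of a "-b"] inf[of "-a" b] compl[of ?c1]
      compl[of ?c2] inf[of "- ?c1" "- ?c2"] compl[of "inf (- ?c1) (- ?c2)"]
    by eventually_elim auto
qed

lemma AE_disagreement_bxor: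
  assumes "finite_measure M" "ultrafilter_name M u" "ultrafilter_name M v"
  shows "AE x in M. x \<in> disagreement u v (bxor a b)
           \<longleftrightarrow> ((x \<in> disagreement u v a) \<noteq> (x \<in> disagreement u v b))"
  using AE_ultrafilter_name_bxor[OF assms(1,2), of a b] AE_ultrafilter_name_bxor[OF assms(1,3), of a b]
  by eventually_elim (auto simp: disagreement_def symdiff_def)

lemma AE_half_card_le_sum_disagreement_bxor_sum:
  assumes M: "finite_measure M" and u: "ultrafilter_name M u" and v: "ultrafilter_name M v"
    and F: "finite F"
  shows "AE x in M. card (Pow F) / 2 * indicator (\<Union>a\<in>F. disagreement u v a) x
           \<le> (\<Sum>S\<in>Pow F. indicator (disagreement u v (bxor_sum.F id S)) x :: real)"
proof -
  let ?D = "disagreement u v" and ?X = "bxor_sum.F id"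
  have "AE x in M. \<forall>S\<in>Pow F. \<forall>a\<in>F.
          x \<in> ?D (?X (symdiff S {a})) \<longleftrightarrow> ((x \<in> ?D a) \<noteq> (x \<in> ?D (?X S)))"
  proof (intro AE_finite_allI finite_Pow_iff[THEN iffD2] F)
    fix S a assume "S \<in> Pow F"
    then have "finite S" using F finite_subset by auto
    then show "AE x in M. x \<in> ?D (?X (symdiff S {a})) \<longleftrightarrow> ((x \<in> ?D a) \<noteq> (x \<in> ?D (?X S)))"
      by (subst bxor_sum_symdiff_singleton[OF \<open>finite S\<close>]) (rule AE_disagreement_bxor[OF M u v])
  qed
  then show ?thesis
  proof eventually_elim
    case (elim x)
    show ?case
    proof (cases "x \<in> (\<Union>a\<in>F. ?D a)")
      case True
      then obtain a where "a \<in> F" "x \<in> ?D a" by auto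
      with elim have "(\<Sum>S\<in>Pow F. indicator (?D (?X S)) x :: real) = card (Pow F) / 2"
        by (intro sum_Pow_eq_half_card_if_flip_complements[OF F]) (auto simp: indicator_def)
      then show ?thesis using True by simp
    qed (simp add: sum_nonneg)
  qed
qed

lemma ex_bxor_sum_disagreement_ge_half:
  assumes M: "finite_measure M" and u: "ultrafilter_name M u" and v: "ultrafilter_name M v"
    and F: "finite F"
  obtains S where "measure M (\<Union>a\<in>F. disagreement u v a)
                     \<le> 2 * measure M (disagreement u v (bxor_sum.F id S))"
proof -
  interpret finite_measure M by fact
  let ?D = "disagreement u v" and ?X = "bxor_sum.F id"
  let ?f = "\<lambda>S. measure M (?D (?X S))"
  have Ds: "?D a \<in> sets M" for a using u v by (rule disagreement_sets)
  have Us: "(\<Union>a\<in>F. ?D a) \<in> sets M" using F Ds by auto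
  have int: "integrable M (indicator A :: _ \<Rightarrow> real)" if "A \<in> sets M" for A
    using that by (intro integrable_real_indicator) (auto simp: less_top[symmetric])
  have "card (Pow F) / 2 * measure M (\<Union>a\<in>F. ?D a)
        = integral\<^sup>L M (\<lambda>x. card (Pow F) / 2 * indicator (\<Union>a\<in>F. ?D a) x)"
    using Us by (simp add: sets.Int_space_eq2)
  also have "\<dots> \<le> integral\<^sup>L M (\<lambda>x. \<Sum>S\<in>Pow F. indicator (?D (?X S)) x :: real)"
    by (rule integral_mono_AE[OF integrable_mult_right[OF int[OF Us]] _
          AE_half_card_le_sum_disagreement_bxor_sum[OF M u v F]])
       (use F Ds in \<open>auto intro!: int\<close>)
  also have "\<dots> = (\<Sum>S\<in>Pow F. ?f S)"
    using Ds by (subst Bochner_Integration.integral_sum) (auto intro!: int)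
  also have "\<dots> \<le> card (Pow F) * Max (?f ` Pow F)"
    using F by (intro sum_bounded_above Max_ge) auto
  finally have "card (Pow F) * measure M (\<Union>a\<in>F. ?D a) \<le> card (Pow F) * (2 * Max (?f ` Pow F))"
    by (simp add: ac_simps)
  then have "measure M (\<Union>a\<in>F. ?D a) \<le> 2 * Max (?f ` Pow F)"
    using F by (simp add: card_Pow mult_le_cancel_left_pos)
  moreover have "Max (?f ` Pow F) \<in> ?f ` Pow F"
    using F by (intro Max_in) auto
  ultimately show ?thesis using that by auto
qed

lemma incseq_UN_image: "incseq (K::nat \<Rightarrow> 'i set) \<Longrightarrow> incseq (\<lambda>n. \<Union>a\<in>K n. D a)"
  unfolding incseq_def by (meson UN_mono order_refl)

lemma (in finite_measure) bdd_above_measure_image: "bdd_above ((\<lambda>i. measure M (A i)) ` I)"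
  by (intro bdd_aboveI[of _ "measure M (space M)"]) (auto intro!: bounded_measure)

lemma incseq_finite_unions_measure_tendsto_Sup:
  fixes D :: "'i \<Rightarrow> 'x set"
  assumes "finite_measure M" and Ds: "\<And>a. D a \<in> sets M"
  obtains K :: "nat \<Rightarrow> 'i set" where "\<And>n. finite (K n)" "incseq K"
    "(\<lambda>n. measure M (\<Union>a\<in>K n. D a)) \<longlonglongrightarrow> (SUP F\<in>{F. finite F}. measure M (\<Union>a\<in>F. D a))"
proof -
  interpret finite_measure M by fact
  define s where "s = (SUP F\<in>{F. finite F}. measure M (\<Union>a\<in>F. D a))"
  have upper: "measure M (\<Union>a\<in>F. D a) \<le> s" if "finite F" for F
    unfolding s_def using that by (intro cSUP_upper[OF _ bdd_above_measure_image]) auto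
  have "\<exists>F. finite F \<and> s - inverse (real (Suc n)) < measure M (\<Union>a\<in>F. D a)" for n
  proof -
    have "s - inverse (real (Suc n)) < s" by simp
    then show ?thesis unfolding s_def by (subst (asm) less_cSUP_iff[OF _ bdd_above_measure_image]) auto
  qed
  then obtain F where F: "\<And>n. finite (F n)"
    "\<And>n. s - inverse (real (Suc n)) < measure M (\<Union>a\<in>F n. D a)"
    by metis
  define K where "K n = (\<Union>m\<le>n. F m)" for n
  have K: "finite (K n)" for n unfolding K_def using F(1) by auto
  have "incseq K" unfolding K_def incseq_def by (auto intro: order_trans)
  have lower: "s - inverse (real (Suc n)) < measure M (\<Union>a\<in>K n. D a)" for n
  proof -
    have "(\<Union>a\<in>F n. D a) \<subseteq> (\<Union>a\<in>K n. D a)" unfolding K_def by auto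
    then have "measure M (\<Union>a\<in>F n. D a) \<le> measure M (\<Union>a\<in>K n. D a)"
      using K Ds by (intro finite_measure_mono) auto
    with F(2)[of n] show ?thesis by simp
  qed
  have lower_tendsto: "(\<lambda>n. s - inverse (real (Suc n))) \<longlonglongrightarrow> s"
    using tendsto_diff[OF tendsto_const LIMSEQ_inverse_real_of_nat] by simp
  have "(\<lambda>n. measure M (\<Union>a\<in>K n. D a)) \<longlonglongrightarrow> s"
  proof (rule tendsto_sandwich[OF _ _ lower_tendsto tendsto_const])
    show "\<forall>\<^sub>F n in sequentially. s - inverse (real (Suc n)) \<le> measure M (\<Union>a\<in>K n. D a)"
      using lower by (simp add: less_imp_le)
    show "\<forall>\<^sub>F n in sequentially. measure M (\<Union>a\<in>K n. D a) \<le> s"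
      using upper K by simp
  qed
  with K \<open>incseq K\<close> show ?thesis unfolding s_def by (rule that)
qed

lemma ex_essential_union:
  fixes D :: "'i \<Rightarrow> 'x set"
  assumes M: "finite_measure M" and Ds: "\<And>a. D a \<in> sets M"
  obtains G where "G \<in> sets M" "\<And>a. measure M (D a - G) = 0"
    "\<And>e. e > 0 \<Longrightarrow> \<exists>F. finite F \<and> measure M G - e < measure M (\<Union>a\<in>F. D a)"
proof -
  interpret finite_measure M by fact
  define s where "s = (SUP F\<in>{F. finite F}. measure M (\<Union>a\<in>F. D a))"
  obtain K where K: "\<And>n. finite (K n)" "incseq K"
    and lim_s: "(\<lambda>n. measure M (\<Union>a\<in>K n. D a)) \<longlonglongrightarrow> s"
    using incseq_finite_unions_measure_tendsto_Sup[of M D, OF M Ds, folded s_def] by blast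
  define G where "G = (\<Union>n. \<Union>a\<in>K n. D a)"
  have G: "G \<in> sets M" unfolding G_def using Ds K(1) by auto
  have lim_G: "(\<lambda>n. measure M (\<Union>a\<in>K n. D a)) \<longlonglongrightarrow> measure M G"
    unfolding G_def using Ds K(1) incseq_UN_image[OF K(2)]
    by (intro finite_Lim_measure_incseq) auto
  have "measure M G = s" using lim_G lim_s by (rule LIMSEQ_unique)
  have "measure M (D a - G) = 0" for a
  proof -
    have "incseq (\<lambda>n. insert a (K n))"
      using K(2) unfolding incseq_def by blast
    then have "(\<lambda>n. measure M (\<Union>b\<in>insert a (K n). D b))
                 \<longlonglongrightarrow> measure M (\<Union>n. \<Union>b\<in>insert a (K n). D b)"
      using Ds K(1) by (intro finite_Lim_measure_incseq incseq_UN_image) auto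
    moreover have "(\<Union>n. \<Union>b\<in>insert a (K n). D b) = G \<union> D a" unfolding G_def by auto
    moreover have "measure M (\<Union>b\<in>insert a (K n). D b) \<le> s" for n
      unfolding s_def using K(1) by (intro cSUP_upper[OF _ bdd_above_measure_image]) auto
    ultimately have "measure M (G \<union> D a) \<le> s" by (intro LIMSEQ_le_const2) auto
    moreover have "measure M (G \<union> D a) = measure M G + measure M (D a - G)"
      using G Ds by (rule finite_measure_Union')
    ultimately show ?thesis using \<open>measure M G = s\<close> measure_nonneg[of M "D a - G"] by simp
  qed
  moreover have "\<exists>F. finite F \<and> measure M G - e < measure M (\<Union>a\<in>F. D a)" if "e > 0" for e
  proof -
    have "eventually (\<lambda>n. measure M G - e < measure M (\<Union>a\<in>K n. D a)) sequentially"
      using lim_G \<open>e > 0\<close> by (intro order_tendstoD(1)) auto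
    then obtain n where "measure M G - e < measure M (\<Union>a\<in>K n. D a)"
      using eventually_sequentially by auto
    then show ?thesis using K(1) by blast
  qed
  ultimately show ?thesis using G that by blast
qed

lemma forces_neq_imp_finite_disagreement_large:
  assumes "prob_space M" and u: "ultrafilter_name M u" and v: "ultrafilter_name M v"
    and neq: "forces_neq M u v" and "\<delta> > 0"
  obtains F where "finite F" "1 - \<delta> < measure M (\<Union>a\<in>F. disagreement u v a)"
proof -
  interpret prob_space M by fact
  have Ds: "disagreement u v a \<in> sets M" for a using u v by (rule disagreement_sets)
  obtain G where G: "G \<in> sets M" and null: "\<And>a. measure M (disagreement u v a - G) = 0"
    and approx: "\<And>e. e > 0 \<Longrightarrow> \<exists>F. finite F \<and> measure M G - e < measure M (\<Union>a\<in>F. disagreement u v a)"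
    using ex_essential_union[of M "disagreement u v", OF finite_measure_axioms Ds] by blast
  have "(space M - G) \<inter> disagreement u v a = disagreement u v a - G" for a
    using sets.sets_into_space[OF Ds[of a]] by auto
  then have "measure M (space M - G) = 0"
    using neq null G unfolding forces_neq_def disagreement_def by auto
  then have "measure M G = 1" using prob_compl[OF G] by simp
  then show ?thesis using approx[OF \<open>\<delta> > 0\<close>] that by auto
qed

lemma forces_neq_imp_disagreement_near_half:
  assumes M: "prob_space M" and u: "ultrafilter_name M u" and v: "ultrafilter_name M v"
    and "forces_neq M u v" and "\<epsilon> > 0"
  obtains C where "1/2 - \<epsilon> < measure M (disagreement u v C)"
proof -
  obtain F where "finite F" and "1 - 2 * \<epsilon> < measure M (\<Union>a\<in>F. disagreement u v a)"
    using forces_neq_imp_finite_disagreement_large[OF assms(1-4), of "2 * \<epsilon>"] \<open>\<epsilon> > 0\<close> by auto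
  moreover obtain S where "measure M (\<Union>a\<in>F. disagreement u v a)
                             \<le> 2 * measure M (disagreement u v (bxor_sum.F id S))"
    using ex_bxor_sum_disagreement_ge_half[OF prob_space.finite_measure[OF M] u v \<open>finite F\<close>] .
  ultimately have "1/2 - \<epsilon> < measure M (disagreement u v (bxor_sum.F id S))" by linarith
  then show ?thesis by (rule that)
qed

lemma prob_space_cantor_measure: "prob_space cantor_measure"
  unfolding cantor_measure_def by (intro prob_space_PiM prob_space_measure_pmf)

theorem theorem7p6:
  fixes u v :: "'a::boolean_algebra \<Rightarrow> ('k \<Rightarrow> bool) set"
  assumes "infinite (UNIV :: 'k set)"
    and "atomless_ba TYPE('a)"
    and "ultrafilter_name cantor_measure u"
    and "ultrafilter_name cantor_measure v"
    and "forces_neq cantor_measure u v"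
  shows "\<forall>\<epsilon>::real. \<epsilon> > 0 \<longrightarrow>
           (\<exists>p \<in> sets cantor_measure. \<exists>C::'a.
              measure cantor_measure p > 1/4 - \<epsilon> \<and> forces_in_symdiff cantor_measure p C u v)"
proof (intro allI impI)
  fix \<epsilon> :: real assume "\<epsilon> > 0"
  obtain C where "1/2 - \<epsilon> < measure cantor_measure (disagreement u v C)"
    using forces_neq_imp_disagreement_near_half[OF prob_space_cantor_measure assms(3-5) \<open>\<epsilon> > 0\<close>] .
  then have "measure cantor_measure (disagreement u v C) > 1/4 - \<epsilon>" by linarith
  moreover have "disagreement u v C \<in> sets cantor_measure" using assms(3,4) by (rule disagreement_sets)
  moreover have "forces_in_symdiff cantor_measure (disagreement u v C) C u v"
    by (simp add: forces_in_symdiff_def disagreement_def)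
  ultimately show "\<exists>p \<in> sets cantor_measure. \<exists>C::'a.
      measure cantor_measure p > 1/4 - \<epsilon> \<and> forces_in_symdiff cantor_measure p C u v"
    by blast
qed

end
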